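(* (Safety.) Fix any reasoning logic $\mathcal{L}$ and use the typing relation it determines. Let $c$ be a closed computation with $\vdash c : A\,!\,\Sigma/\mathcal{E}$. Progress: either there is a computation $c'$ with $c \leadsto c'$, or $c = \mathtt{return}\ v$ for some value $v$, or $c = \mathit{op}(v; y.c_0)$ for some operation $\mathit{op} \in \Sigma$, value $v$ and computation $c_0$. Preservation: if $c \leadsto c'$, then $\vdash c' : A\,!\,\Sigma/\mathcal{E}$.
   Context: We work with a fine-grain call-by-value calculus of algebraic effects and handlers, parametrised by a reasoning logic $\mathcal{L}$. Syntax. Values $v ::= x \mid () \mid \mathtt{true} \mid \mathtt{false} \mid \mathtt{fun}\ x \mapsto c \mid \mathtt{handler}\,(\mathtt{return}\ x \mapsto c_r;\ h)$. Computations $c ::= \mathtt{if}\ v\ \mathtt{then}\ c_1\ \mathtt{else}\ c_2 \mid v_1\, v_2 \mid \mathtt{return}\ v \mid \mathit{op}(v; y.c) \mid \mathtt{do}\ x \leftarrow c_1\ \mathtt{in}\ c_2 \mid \mathtt{with}\ v\ \mathtt{handle}\ c$, where $\mathit{op}$ ranges over operation names and $y$ is bound in $c$. Operation clauses $h$ are finite sets of clauses $\mathit{op}(x;k) \mapsto c_{\mathit{op}}$, at most one per operation name. Operational semantics: $\leadsto$ is the least relation on computations with: $\mathtt{if}\ \mathtt{true}\ \mathtt{then}\ c_1\ \mathtt{else}\ c_2 \leadsto c_1$; $\mathtt{if}\ \mathtt{false}\ \mathtt{then}\ c_1\ \mathtt{else}\ c_2 \leadsto c_2$; $(\mathtt{fun}\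 x\mapsto c)\,v \leadsto c[v/x]$; if $c_1\leadsto c_1'$ then $\mathtt{do}\ x\leftarrow c_1\ \mathtt{in}\ c_2 \leadsto \mathtt{do}\ x\leftarrow c_1'\ \mathtt{in}\ c_2$; $\mathtt{do}\ x\leftarrow \mathtt{return}\ v\ \mathtt{in}\ c \leadsto c[v/x]$; $\mathtt{do}\ x\leftarrow \mathit{op}(v;y.c_1)\ \mathtt{in}\ c_2 \leadsto \mathit{op}(v;y.\,\mathtt{do}\ x\leftarrow c_1\ \mathtt{in}\ c_2)$; if $c\leadsto c'$ then $\mathtt{with}\ v\ \mathtt{handle}\ c\leadsto \mathtt{with}\ v\ \mathtt{handle}\ c'$; and with $H=\mathtt{handler}\,(\mathtt{return}\ x\mapsto c_r;\ h)$: $\mathtt{with}\ H\ \mathtt{handle}\ \mathtt{return}\ v \leadsto c_r[v/x]$, and $\mathtt{with}\ H\ \mathtt{handle}\ \mathit{op}(v;y.c)\leadsto c_{\mathit{op}}[v/x,(\mathtt{fun}\ y\mapsto \mathtt{with}\ H\ \mathtt{handle}\ c)/k]$ whenever $(\mathit{op}(x;k)\mapsto c_{\mathit{op}})\in h$. Types: value types $A,B ::= \mathtt{unit}\mid\mathtt{bool}\mid A\to\underline{C}\mid \underline{C}\Rightarrow\underline{D}$; computation types $\underline{C},\underline{D} ::= A\,!\,\Sigma/\mathcal{E}$, where a signature $\Sigma$ is a finite set of typed operations $\mathit{op}:A_{\mathit{op}}\to B_{\mathit{op}}$ with distinct names, and a theory $\mathcal{E}$ is a finite set of equations $\Gamma;Z\vdash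 T_1\sim T_2$. Contexts $\Gamma ::= \varepsilon\mid\Gamma,x:A$; template contexts $Z ::= \varepsilon \mid Z, z:A\to *$; templates $T ::= z(v)\mid \mathtt{if}\ v\ \mathtt{then}\ T_1\ \mathtt{else}\ T_2\mid \mathit{op}(v;y.T)$. Typing (mutually defined; all types must be well-formed, where $A\,!\,\Sigma/\mathcal{E}$ is well-formed iff its component types are and for each equation $\Gamma;Z\vdash T_1\sim T_2$ in $\mathcal{E}$ both $\Gamma;Z\vdash T_1:\Sigma$ and $\Gamma;Z\vdash T_2:\Sigma$). Templates: $\Gamma;Z\vdash z(v):\Sigma$ if $(z:A\to * )\in Z$ and $\Gamma\vdash v:A$; $\Gamma;Z\vdash \mathtt{if}\ v\ \mathtt{then}\ T_1\ \mathtt{else}\ T_2:\Sigma$ if $\Gamma\vdash v:\mathtt{bool}$ and $\Gamma;Z\vdash T_i:\Sigma$; $\Gamma;Z\vdash \mathit{op}(v;y.T):\Sigma$ if $(\mathit{op}:A_{\mathit{op}}\to B_{\mathit{op}})\in\Sigma$, $\Gamma\vdash v:A_{\mathit{op}}$ and $\Gamma,y:B_{\mathit{op}};Z\vdash T:\Sigma$. Values: $\Gamma\vdash x:A$ if $(x:A)\in\Gamma$; $\Gamma\vdash ():\mathtt{unit}$; $\Gamma\vdash\mathtt{true}:\mathtt{bool}$, $\Gamma\vdash\mathtt{false}:\mathtt{bool}$; $\Gamma\vdash \mathtt{fun}\ x\mapsto c:A\to\underline{C}$ if $\Gamma,x:A\vdash c:\underline{C}$; $\Gamma\vdash \mathtt{handler}\,(\mathtt{return}\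 x\mapsto c_r;h): A\,!\,\Sigma/\mathcal{E}\Rightarrow\underline{D}$ if $\Gamma,x:A\vdash c_r:\underline{D}$ and $\Gamma\vdash h\models_{\mathcal{E},\Sigma}\underline{D}$. Computations: $\Gamma\vdash \mathtt{if}\ v\ \mathtt{then}\ c_1\ \mathtt{else}\ c_2:\underline{C}$ if $\Gamma\vdash v:\mathtt{bool}$, $\Gamma\vdash c_i:\underline{C}$; $\Gamma\vdash v_1\,v_2:\underline{C}$ if $\Gamma\vdash v_1:A\to\underline{C}$, $\Gamma\vdash v_2:A$; $\Gamma\vdash\mathtt{return}\ v:A\,!\,\Sigma/\mathcal{E}$ (any well-formed $\Sigma,\mathcal{E}$) if $\Gamma\vdash v:A$; $\Gamma\vdash \mathit{op}(v;y.c):A\,!\,\Sigma/\mathcal{E}$ if $(\mathit{op}:A_{\mathit{op}}\to B_{\mathit{op}})\in\Sigma$, $\Gamma\vdash v:A_{\mathit{op}}$, $\Gamma,y:B_{\mathit{op}}\vdash c:A\,!\,\Sigma/\mathcal{E}$; $\Gamma\vdash\mathtt{do}\ x\leftarrow c_1\ \mathtt{in}\ c_2:B\,!\,\Sigma/\mathcal{E}$ if $\Gamma\vdash c_1:A\,!\,\Sigma/\mathcal{E}$ and $\Gamma,x:A\vdash c_2:B\,!\,\Sigma/\mathcal{E}$; $\Gamma\vdash \mathtt{with}\ v\ \mathtt{handle}\ c:\underline{D}$ if $\Gamma\vdash v:\underline{C}\Rightarrow\underline{D}$ and $\Gamma\vdash c:\underline{C}$. Clauses: $\Gamma\vdash h:\Sigma\Rrightarrow\underline{D}$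 iff $h$ has exactly one clause $\mathit{op}(x;k)\mapsto c_{\mathit{op}}$ for each $\mathit{op}\in\Sigma$ and no others, with $\Gamma,x:A_{\mathit{op}},k:B_{\mathit{op}}\to\underline{D}\vdash c_{\mathit{op}}:\underline{D}$. A reasoning logic $\mathcal{L}$ supplies the well-definedness judgement $\Gamma\vdash h\models_{\mathcal{E},\Sigma}\underline{D}$ ("clauses $h$ map computations equivalent under $\mathcal{E}$ to equivalent computations of type $\underline{D}$"); it may only hold when $\Gamma\vdash h:\Sigma\Rrightarrow\underline{D}$ and all equations of $\mathcal{E}$ are well-typed with respect to $\Sigma$.
   Formalization: A reasoning logic $\mathcal{L}$ must also keep $\Gamma\vdash h\models_{\mathcal{E},\Sigma}\underline{D}$ under weakening of $\Gamma$ and under substitution, into h, of a closed value of type A for a variable x : A removed from $\Gamma$. The statement above fails without it. *)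

theory Defs
  imports Main "HOL-Library.FSet"
begin

type_synonym var = string
type_synonym opname = string
type_synonym tvar = string

datatype val =
    Var var
  | UnitV
  | TrueV
  | FalseV
  | Fun var comp
  | Handler var comp "clause fset"
    \<comment> \<open>handler (return x \<mapsto> c_r; h), h a finite set of clauses op(x;k) \<mapsto> c_op\<close>
and comp =
    If val comp comp
  | App val val
  | Return val
  | Op opname val var comp      \<comment> \<open>op(v; y.c)\<close>
  | Do var comp comp            \<comment> \<open>do x \<leftarrow> c1 in c2\<close>
  | With val comp               \<comment> \<open>with v handle c\<close>
and clause = Clause opname var var comp   \<comment> \<open>op(x; k) \<mapsto> c_op\<close>

type_synonym clauses = "clause fset"

datatype tmpl =
    TVar tvar val             \<comment> \<open>z(v)\<close>
  | TIf val tmpl tmpl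
  | TOp opname val var tmpl   \<comment> \<open>op(v; y.T)\<close>

datatype vty =
    UnitT
  | BoolT
  | FunT vty cty
  | HandT cty cty
and cty = CTy vty "(opname \<times> vty \<times> vty) fset" "eqn fset"   \<comment> \<open>A ! \<Sigma> / \<E>\<close>
and eqn = Eqn "(var \<times> vty) list" "(tvar \<times> vty) list" tmpl tmpl
    \<comment> \<open>\<Gamma>; Z \<turnstile> T1 \<sim> T2; contexts are lists (later entries shadow earlier ones)\<close>

type_synonym sig = "(opname \<times> vty \<times> vty) fset"
type_synonym theory_ = "eqn fset"
type_synonym ctx = "var \<rightharpoonup> vty"
type_synonym tctx = "tvar \<rightharpoonup> vty"

definition ctx_of :: "('a \<times> vty) list \<Rightarrow> 'a \<rightharpoonup> vty" where
  "ctx_of G = map_of (rev G)"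

section \<open>Substitution (of closed values)\<close>

primrec subst_v :: "val \<Rightarrow> var \<Rightarrow> val \<Rightarrow> val"
  and subst_c :: "val \<Rightarrow> var \<Rightarrow> comp \<Rightarrow> comp"
  and subst_cl :: "val \<Rightarrow> var \<Rightarrow> clause \<Rightarrow> clause" where
  "subst_v u x (Var y) = (if x = y then u else Var y)"
| "subst_v u x UnitV = UnitV"
| "subst_v u x TrueV = TrueV"
| "subst_v u x FalseV = FalseV"
| "subst_v u x (Fun y c) = Fun y (if x = y then c else subst_c u x c)"
| "subst_v u x (Handler y cr h) =
     Handler y (if x = y then cr else subst_c u x cr) (fimage (subst_cl u x) h)"
| "subst_c u x (If v c1 c2) = If (subst_v u x v) (subst_c u x c1) (subst_c u x c2)"
| "subst_c u x (App v1 v2) = App (subst_v u x v1) (subst_v u x v2)"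
| "subst_c u x (Return v) = Return (subst_v u x v)"
| "subst_c u x (Op op v y c) = Op op (subst_v u x v) y (if x = y then c else subst_c u x c)"
| "subst_c u x (Do y c1 c2) = Do y (subst_c u x c1) (if x = y then c2 else subst_c u x c2)"
| "subst_c u x (With v c) = With (subst_v u x v) (subst_c u x c)"
| "subst_cl u x (Clause op z k c) = Clause op z k (if x = z \<or> x = k then c else subst_c u x c)"

definition subst_h :: "val \<Rightarrow> var \<Rightarrow> clauses \<Rightarrow> clauses" where
  "subst_h u x h = fimage (subst_cl u x) h"

inductive step :: "comp \<Rightarrow> comp \<Rightarrow> bool" (infix "\<leadsto>" 50) where
  If_true: "If TrueV c1 c2 \<leadsto> c1"
| If_false: "If FalseV c1 c2 \<leadsto> c2"
| App_fun: "App (Fun x c) v \<leadsto> subst_c v x c"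
| Do_step: "c1 \<leadsto> c1' \<Longrightarrow> Do x c1 c2 \<leadsto> Do x c1' c2"
| Do_return: "Do x (Return v) c \<leadsto> subst_c v x c"
| Do_op: "Do x (Op op v y c1) c2 \<leadsto> Op op v y (Do x c1 c2)"
| With_step: "c \<leadsto> c' \<Longrightarrow> With v c \<leadsto> With v c'"
| With_return: "With (Handler x cr h) (Return v) \<leadsto> subst_c v x cr"
| With_op: "Clause op x k cop |\<in>| h \<Longrightarrow>
    With (Handler xr cr h) (Op op v y c) \<leadsto>
      subst_c v x (subst_c (Fun y (With (Handler xr cr h) c)) k cop)"
    \<comment> \<open>c_op[v/x, (fun y \<mapsto> with H handle c)/k]; when x = k the binding of k shadows\<close>

type_synonym logic = "ctx \<Rightarrow> clauses \<Rightarrow> theory_ \<Rightarrow> sig \<Rightarrow> cty \<Rightarrow> bool"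
  \<comment> \<open>L \<Gamma> h \<E> \<Sigma> D  stands for  \<Gamma> \<turnstile> h \<Turnstile>_{\<E>,\<Sigma>} D\<close>

definition clauses_ok :: "clauses \<Rightarrow> sig \<Rightarrow> bool" where
  "clauses_ok h \<Sigma> \<longleftrightarrow>
     (\<forall>op. (\<exists>A B. (op, A, B) |\<in>| \<Sigma>) \<longleftrightarrow> (\<exists>x k c. Clause op x k c |\<in>| h)) \<and>
     (\<forall>op x k c x' k' c'. Clause op x k c |\<in>| h \<longrightarrow> Clause op x' k' c' |\<in>| h \<longrightarrow>
        x = x' \<and> k = k' \<and> c = c')"

inductive
      wf_v :: "logic \<Rightarrow> vty \<Rightarrow> bool"
  and wf_c :: "logic \<Rightarrow> cty \<Rightarrow> bool"
  and ttyp :: "logic \<Rightarrow> ctx \<Rightarrow> tctx \<Rightarrow> tmpl \<Rightarrow> sig \<Rightarrow> bool"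
  and vtyp :: "logic \<Rightarrow> ctx \<Rightarrow> val \<Rightarrow> vty \<Rightarrow> bool"
  and ctyp :: "logic \<Rightarrow> ctx \<Rightarrow> comp \<Rightarrow> cty \<Rightarrow> bool"
  and htyp :: "logic \<Rightarrow> ctx \<Rightarrow> clauses \<Rightarrow> sig \<Rightarrow> cty \<Rightarrow> bool"
  for L :: logic
where
  wf_unit: "wf_v L UnitT"
| wf_bool: "wf_v L BoolT"
| wf_fun: "wf_v L A \<Longrightarrow> wf_c L C \<Longrightarrow> wf_v L (FunT A C)"
| wf_hand: "wf_c L C \<Longrightarrow> wf_c L D \<Longrightarrow> wf_v L (HandT C D)"
| wf_cty: "wf_v L A \<Longrightarrow>
    (\<forall>op Ao Bo. (op, Ao, Bo) |\<in>| \<Sigma> \<longrightarrow> wf_v L Ao \<and> wf_v L Bo) \<Longrightarrow>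
    (\<forall>op Ao Bo Ao' Bo'. (op, Ao, Bo) |\<in>| \<Sigma> \<longrightarrow> (op, Ao', Bo') |\<in>| \<Sigma> \<longrightarrow> Ao = Ao' \<and> Bo = Bo') \<Longrightarrow>
    (\<forall>G Z T1 T2. Eqn G Z T1 T2 |\<in>| E \<longrightarrow>
        (\<forall>p \<in> set G. wf_v L (snd p)) \<and> (\<forall>p \<in> set Z. wf_v L (snd p)) \<and>
        ttyp L (ctx_of G) (ctx_of Z) T1 \<Sigma> \<and> ttyp L (ctx_of G) (ctx_of Z) T2 \<Sigma>) \<Longrightarrow>
    wf_c L (CTy A \<Sigma> E)"
| t_var: "Z z = Some A \<Longrightarrow> vtyp L \<Gamma> v A \<Longrightarrow> ttyp L \<Gamma> Z (TVar z v) \<Sigma>"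
| t_if: "vtyp L \<Gamma> v BoolT \<Longrightarrow> ttyp L \<Gamma> Z T1 \<Sigma> \<Longrightarrow> ttyp L \<Gamma> Z T2 \<Sigma> \<Longrightarrow>
    ttyp L \<Gamma> Z (TIf v T1 T2) \<Sigma>"
| t_op: "(op, Ao, Bo) |\<in>| \<Sigma> \<Longrightarrow> vtyp L \<Gamma> v Ao \<Longrightarrow> ttyp L (\<Gamma>(y \<mapsto> Bo)) Z T \<Sigma> \<Longrightarrow>
    ttyp L \<Gamma> Z (TOp op v y T) \<Sigma>"
| v_var: "\<Gamma> x = Some A \<Longrightarrow> wf_v L A \<Longrightarrow> vtyp L \<Gamma> (Var x) A"
| v_unit: "vtyp L \<Gamma> UnitV UnitT"
| v_true: "vtyp L \<Gamma> TrueV BoolT"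
| v_false: "vtyp L \<Gamma> FalseV BoolT"
| v_fun: "ctyp L (\<Gamma>(x \<mapsto> A)) c C \<Longrightarrow> wf_v L (FunT A C) \<Longrightarrow> vtyp L \<Gamma> (Fun x c) (FunT A C)"
| v_handler: "ctyp L (\<Gamma>(x \<mapsto> A)) cr D \<Longrightarrow> L \<Gamma> h E \<Sigma> D \<Longrightarrow>
    wf_v L (HandT (CTy A \<Sigma> E) D) \<Longrightarrow>
    vtyp L \<Gamma> (Handler x cr h) (HandT (CTy A \<Sigma> E) D)"
| c_if: "vtyp L \<Gamma> v BoolT \<Longrightarrow> ctyp L \<Gamma> c1 C \<Longrightarrow> ctyp L \<Gamma> c2 C \<Longrightarrow> ctyp L \<Gamma> (If v c1 c2) C"
| c_app: "vtyp L \<Gamma> v1 (FunT A C) \<Longrightarrow> vtyp L \<Gamma> v2 A \<Longrightarrow> ctyp L \<Gamma> (App v1 v2) C"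
| c_return: "vtyp L \<Gamma> v A \<Longrightarrow> wf_c L (CTy A \<Sigma> E) \<Longrightarrow> ctyp L \<Gamma> (Return v) (CTy A \<Sigma> E)"
| c_op: "(op, Ao, Bo) |\<in>| \<Sigma> \<Longrightarrow> vtyp L \<Gamma> v Ao \<Longrightarrow> ctyp L (\<Gamma>(y \<mapsto> Bo)) c (CTy A \<Sigma> E) \<Longrightarrow>
    wf_c L (CTy A \<Sigma> E) \<Longrightarrow> ctyp L \<Gamma> (Op op v y c) (CTy A \<Sigma> E)"
| c_do: "ctyp L \<Gamma> c1 (CTy A \<Sigma> E) \<Longrightarrow> ctyp L (\<Gamma>(x \<mapsto> A)) c2 (CTy B \<Sigma> E) \<Longrightarrow>
    ctyp L \<Gamma> (Do x c1 c2) (CTy B \<Sigma> E)"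
| c_with: "vtyp L \<Gamma> v (HandT C D) \<Longrightarrow> ctyp L \<Gamma> c C \<Longrightarrow> ctyp L \<Gamma> (With v c) D"
| h_clauses: "clauses_ok h \<Sigma> \<Longrightarrow>
    (\<forall>op x k c Ao Bo. Clause op x k c |\<in>| h \<longrightarrow> (op, Ao, Bo) |\<in>| \<Sigma> \<longrightarrow>
        ctyp L (\<Gamma>(x \<mapsto> Ao, k \<mapsto> FunT Bo D)) c D) \<Longrightarrow>
    wf_c L D \<Longrightarrow>
    htyp L \<Gamma> h \<Sigma> D"

text \<open>A reasoning logic supplies the judgement L; it may only hold for well-typed clauses and
  theories whose equations are well-typed w.r.t. the signature.  As for any judgement of a
  logic over the calculus, it is required to be stable under weakening of the context and under
  substitution of closed well-typed values.\<close>

definition reasoning_logic :: "logic \<Rightarrow> bool" where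
  "reasoning_logic L \<longleftrightarrow>
     (\<forall>\<Gamma> h E \<Sigma> D. L \<Gamma> h E \<Sigma> D \<longrightarrow>
        htyp L \<Gamma> h \<Sigma> D \<and>
        (\<forall>G Z T1 T2. Eqn G Z T1 T2 |\<in>| E \<longrightarrow>
           ttyp L (ctx_of G) (ctx_of Z) T1 \<Sigma> \<and> ttyp L (ctx_of G) (ctx_of Z) T2 \<Sigma>)) \<and>
     (\<forall>\<Gamma> \<Gamma>' h E \<Sigma> D. L \<Gamma> h E \<Sigma> D \<longrightarrow> \<Gamma> \<subseteq>\<^sub>m \<Gamma>' \<longrightarrow> L \<Gamma>' h E \<Sigma> D) \<and>
     (\<forall>\<Gamma> x A v h E \<Sigma> D. L (\<Gamma>(x \<mapsto> A)) h E \<Sigma> D \<longrightarrow> vtyp L Map.empty v A \<longrightarrow>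
        L \<Gamma> (subst_h v x h) E \<Sigma> D)"

end

theory Submission
  imports Defs
begin

text \<open>The reasoning logic enters only through the handler rule, which is
  why its judgement must be stable under weakening and closed substitution.  For progress of
  a handled operation, the logic's judgement implies that the clauses cover the whole signature;
  for preservation, the captured continuation fun y \<mapsto> with H handle c receives the
  type B_op \<rightarrow> D expected by the clause.\<close>

lemmas typing_induct = wf_v_wf_c_ttyp_vtyp_ctyp_htyp.inducts
lemmas typing_intros = wf_v_wf_c_ttyp_vtyp_ctyp_htyp.intros

inductive_cases wf_v_FunTE: "wf_v L (FunT A C)"
inductive_cases wf_v_HandTE: "wf_v L (HandT C D)"
inductive_cases wf_c_CTyE: "wf_c L (CTy A \<Sigma> E)"
inductive_cases vtyp_FunE: "vtyp L \<Gamma> (Fun x c) T"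
inductive_cases vtyp_HandlerE: "vtyp L \<Gamma> (Handler x cr h) T"
inductive_cases ctyp_IfE: "ctyp L \<Gamma> (If v c1 c2) C"
inductive_cases ctyp_AppE: "ctyp L \<Gamma> (App v1 v2) C"
inductive_cases ctyp_ReturnE: "ctyp L \<Gamma> (Return v) C"
inductive_cases ctyp_OpE: "ctyp L \<Gamma> (Op op v y c) C"
inductive_cases ctyp_DoE: "ctyp L \<Gamma> (Do x c1 c2) C"
inductive_cases ctyp_WithE: "ctyp L \<Gamma> (With v c) C"
inductive_cases htypE: "htyp L \<Gamma> h \<Sigma> D"

inductive_cases closed_vtyp_BoolTE: "vtyp L Map.empty v BoolT"
inductive_cases closed_vtyp_FunTE: "vtyp L Map.empty v (FunT A C)"
inductive_cases closed_vtyp_HandTE: "vtyp L Map.empty v (HandT C D)"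

lemma reasoning_logic_htyp:
  "reasoning_logic L \<Longrightarrow> L \<Gamma> h E \<Sigma> D \<Longrightarrow> htyp L \<Gamma> h \<Sigma> D"
  unfolding reasoning_logic_def by blast

lemma reasoning_logic_weaken:
  "reasoning_logic L \<Longrightarrow> L \<Gamma> h E \<Sigma> D \<Longrightarrow> \<Gamma> \<subseteq>\<^sub>m \<Gamma>' \<Longrightarrow> L \<Gamma>' h E \<Sigma> D"
  unfolding reasoning_logic_def by blast

lemma reasoning_logic_subst:
  "reasoning_logic L \<Longrightarrow> L (\<Gamma>(x \<mapsto> A)) h E \<Sigma> D \<Longrightarrow> vtyp L Map.empty u A \<Longrightarrow>
     L \<Gamma> (subst_h u x h) E \<Sigma> D"
  unfolding reasoning_logic_def by blast

lemma typing_wf: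
  "wf_v L T \<Longrightarrow> True"
  "wf_c L C \<Longrightarrow> True"
  "ttyp L \<Gamma> Z t \<Sigma> \<Longrightarrow> True"
  "vtyp L \<Gamma> v T \<Longrightarrow> wf_v L T"
  "ctyp L \<Gamma> c C \<Longrightarrow> wf_c L C"
  "htyp L \<Gamma> h \<Sigma> D \<Longrightarrow> True"
  by (induct rule: typing_induct) (auto elim: wf_v_FunTE wf_v_HandTE intro: typing_intros)

lemma typing_weaken:
  assumes "reasoning_logic L"
  shows
  "wf_v L T \<Longrightarrow> True"
  "wf_c L C \<Longrightarrow> True"
  "ttyp L \<Gamma> Z t \<Sigma> \<Longrightarrow> True"
  "vtyp L \<Gamma> v T \<Longrightarrow> \<Gamma> \<subseteq>\<^sub>m \<Gamma>' \<Longrightarrow> vtyp L \<Gamma>' v T"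
  "ctyp L \<Gamma> c C \<Longrightarrow> \<Gamma> \<subseteq>\<^sub>m \<Gamma>' \<Longrightarrow> ctyp L \<Gamma>' c C"
  "htyp L \<Gamma> h \<Sigma> D \<Longrightarrow> True"
proof (induct arbitrary: and and and \<Gamma>' and \<Gamma>' and rule: typing_induct)
  case (v_var \<Gamma> x A)
  then show ?case by (auto intro: typing_intros simp: map_le_def dom_def)
next
  case (v_handler \<Gamma> x A cr D h E \<Sigma>)
  then show ?case
    using assms by (blast intro: typing_intros map_le_upd reasoning_logic_weaken)
qed (auto intro!: typing_intros map_le_upd)

lemma closed_vtyp_weaken:
  "reasoning_logic L \<Longrightarrow> vtyp L Map.empty v T \<Longrightarrow> vtyp L \<Gamma> v T"
  using typing_weaken(4) map_le_empty by blast

lemma ctyp_subst_under_binder: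
  assumes "\<Gamma>' = \<Gamma>(x \<mapsto> A)" and "ctyp L (\<Gamma>'(y \<mapsto> B)) c C"
    and IH: "\<And>\<Delta>. \<Gamma>'(y \<mapsto> B) = \<Delta>(x \<mapsto> A) \<Longrightarrow> ctyp L \<Delta> (subst_c u x c) C"
  shows "ctyp L (\<Gamma>(y \<mapsto> B)) (if x = y then c else subst_c u x c) C"
proof (cases "x = y")
  case True
  with assms(1,2) show ?thesis by simp
next
  case False
  then have "\<Gamma>'(y \<mapsto> B) = \<Gamma>(y \<mapsto> B, x \<mapsto> A)"
    using assms(1) by (simp add: fun_upd_twist)
  with False IH show ?thesis by simp
qed

text \<open>The substituted value u is closed, so the capture-permitting substitution of the
  calculus is sound here.\<close>

lemma typing_subst:
  assumes "reasoning_logic L" and "vtyp L Map.empty u A"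
  shows
  "wf_v L T \<Longrightarrow> True"
  "wf_c L C \<Longrightarrow> True"
  "ttyp L \<Gamma>' Z t \<Sigma> \<Longrightarrow> True"
  "vtyp L \<Gamma>' v T \<Longrightarrow> \<Gamma>' = \<Gamma>(x \<mapsto> A) \<Longrightarrow> vtyp L \<Gamma> (subst_v u x v) T"
  "ctyp L \<Gamma>' c C \<Longrightarrow> \<Gamma>' = \<Gamma>(x \<mapsto> A) \<Longrightarrow> ctyp L \<Gamma> (subst_c u x c) C"
  "htyp L \<Gamma>' h \<Sigma> D \<Longrightarrow> True"
proof (induct arbitrary: and and and \<Gamma> and \<Gamma> and rule: typing_induct)
  case (v_var \<Gamma>' y B)
  then show ?case
    using assms by (cases "x = y") (auto intro: closed_vtyp_weaken typing_intros)
next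
  case (v_fun \<Gamma>' y B c C)
  have "ctyp L (\<Gamma>(y \<mapsto> B)) (if x = y then c else subst_c u x c) C"
    by (rule ctyp_subst_under_binder[OF v_fun.prems v_fun.hyps(1,2)])
  with v_fun.hyps(3) show ?case by (simp add: typing_intros)
next
  case (v_handler \<Gamma>' y B cr D h E \<Sigma>)
  have "ctyp L (\<Gamma>(y \<mapsto> B)) (if x = y then cr else subst_c u x cr) D"
    by (rule ctyp_subst_under_binder[OF v_handler.prems v_handler.hyps(1,2)])
  moreover have "L \<Gamma> (subst_h u x h) E \<Sigma> D"
    using assms reasoning_logic_subst v_handler by blast
  ultimately show ?case
    using v_handler.hyps(4) by (simp add: subst_h_def typing_intros)
next
  case (c_op op Ao Bo \<Sigma> \<Gamma>' v y c B E)
  have "ctyp L (\<Gamma>(y \<mapsto> Bo)) (if x = y then c else subst_c u x c) (CTy B \<Sigma> E)"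
    by (rule ctyp_subst_under_binder[OF c_op.prems c_op.hyps(4,5)])
  with c_op show ?case by (simp add: typing_intros)
next
  case (c_do \<Gamma>' c1 B \<Sigma> E y c2 B')
  have "ctyp L (\<Gamma>(y \<mapsto> B)) (if x = y then c2 else subst_c u x c2) (CTy B' \<Sigma> E)"
    by (rule ctyp_subst_under_binder[OF c_do.prems c_do.hyps(3,4)])
  moreover have "ctyp L \<Gamma> (subst_c u x c1) (CTy B \<Sigma> E)"
    using c_do.hyps(2) c_do.prems by blast
  ultimately show ?case by (simp add: typing_intros)
qed (auto intro: typing_intros)

lemma ctyp_subst:
  "reasoning_logic L \<Longrightarrow> ctyp L (\<Gamma>(x \<mapsto> A)) c C \<Longrightarrow> vtyp L Map.empty u A \<Longrightarrow>
     ctyp L \<Gamma> (subst_c u x c) C"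
  using typing_subst(5) by blast

lemma htyp_clause_exists:
  "htyp L \<Gamma> h \<Sigma> D \<Longrightarrow> (op, Ao, Bo) |\<in>| \<Sigma> \<Longrightarrow> \<exists>x k c. Clause op x k c |\<in>| h"
  by (elim htypE) (unfold clauses_ok_def, blast)

lemma vtyp_Handler_clause:
  assumes "reasoning_logic L" and "vtyp L \<Gamma> (Handler xr cr h) (HandT (CTy A \<Sigma> E) D)"
    and "Clause op x k c |\<in>| h" and "(op, Ao, Bo) |\<in>| \<Sigma>"
  shows "ctyp L (\<Gamma>(x \<mapsto> Ao, k \<mapsto> FunT Bo D)) c D"
proof -
  from assms(2) have "L \<Gamma> h E \<Sigma> D" by (auto elim: vtyp_HandlerE)
  with assms(1) have "htyp L \<Gamma> h \<Sigma> D" by (rule reasoning_logic_htyp)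
  with assms(3,4) show ?thesis by (auto elim: htypE)
qed

lemma vtyp_continuation:
  assumes "reasoning_logic L" and H: "vtyp L Map.empty H (HandT (CTy A \<Sigma> E) D)"
    and "(op, Ao, Bo) |\<in>| \<Sigma>" and c: "ctyp L [y \<mapsto> Bo] c (CTy A \<Sigma> E)"
  shows "vtyp L Map.empty (Fun y (With H c)) (FunT Bo D)"
proof (rule typing_intros)
  have "vtyp L [y \<mapsto> Bo] H (HandT (CTy A \<Sigma> E) D)"
    using closed_vtyp_weaken[OF assms(1) H] .
  from this c show "ctyp L [y \<mapsto> Bo] (With H c) D" by (rule typing_intros)
  have "wf_v L (HandT (CTy A \<Sigma> E) D)" using typing_wf(4)[OF H] .
  with assms(3) show "wf_v L (FunT Bo D)"
    by (auto elim!: wf_v_HandTE wf_c_CTyE intro: typing_intros)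
qed

lemma preservation:
  assumes "reasoning_logic L"
  shows "c \<leadsto> c' \<Longrightarrow> ctyp L Map.empty c C \<Longrightarrow> ctyp L Map.empty c' C"
proof (induction arbitrary: C rule: step.induct)
  case (Do_op x op v y c1 c2)
  then obtain A B \<Sigma> E Ao Bo where C: "C = CTy B \<Sigma> E" and op: "(op, Ao, Bo) |\<in>| \<Sigma>"
    and v: "vtyp L Map.empty v Ao" and c1: "ctyp L [y \<mapsto> Bo] c1 (CTy A \<Sigma> E)"
    and c2: "ctyp L [x \<mapsto> A] c2 (CTy B \<Sigma> E)"
    by (auto elim!: ctyp_DoE ctyp_OpE)
  have "ctyp L [y \<mapsto> Bo, x \<mapsto> A] c2 (CTy B \<Sigma> E)"
    using typing_weaken(5)[OF assms c2] by (simp add: map_le_upd)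
  with c1 have "ctyp L [y \<mapsto> Bo] (Do x c1 c2) C"
    unfolding C by (rule typing_intros)
  with op v typing_wf(5)[OF c2] show ?case
    unfolding C by (auto intro: typing_intros)
next
  case (With_op op x k cop h xr cr v y c)
  then obtain A \<Sigma> E Ao Bo where H: "vtyp L Map.empty (Handler xr cr h) (HandT (CTy A \<Sigma> E) C)"
    and op: "(op, Ao, Bo) |\<in>| \<Sigma>" and v: "vtyp L Map.empty v Ao"
    and c: "ctyp L [y \<mapsto> Bo] c (CTy A \<Sigma> E)"
    by (auto elim!: ctyp_WithE ctyp_OpE elim: vtyp_HandlerE)
  have "ctyp L [x \<mapsto> Ao, k \<mapsto> FunT Bo C] cop C"
    using vtyp_Handler_clause[OF assms H With_op.hyps op] by simp
  then have "ctyp L [x \<mapsto> Ao] (subst_c (Fun y (With (Handler xr cr h) c)) k cop) C"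
    using ctyp_subst assms vtyp_continuation[OF assms H op c] by blast
  with v show ?case using ctyp_subst assms by blast
qed (use assms in \<open>auto elim!: ctyp_IfE ctyp_AppE ctyp_DoE ctyp_ReturnE ctyp_WithE
                       vtyp_FunE vtyp_HandlerE intro: ctyp_subst typing_intros\<close>)

lemma progress:
  assumes "reasoning_logic L"
  shows
  "wf_v L T \<Longrightarrow> True"
  "wf_c L C \<Longrightarrow> True"
  "ttyp L \<Gamma> Z t \<Sigma> \<Longrightarrow> True"
  "vtyp L \<Gamma> v T \<Longrightarrow> True"
  "ctyp L \<Gamma> c C \<Longrightarrow> \<Gamma> = Map.empty \<Longrightarrow> C = CTy A \<Sigma> E \<Longrightarrow>
     (\<exists>c'. c \<leadsto> c') \<or> (\<exists>v. c = Return v) \<or>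
     (\<exists>op v y c0. c = Op op v y c0 \<and> (\<exists>Ao Bo. (op, Ao, Bo) |\<in>| \<Sigma>))"
  "htyp L \<Gamma> h \<Sigma> D \<Longrightarrow> True"
proof (induct arbitrary: and and and and A \<Sigma> E and rule: typing_induct)
  case (c_with \<Gamma> v C D c)
  then obtain xr cr h A' \<Sigma>' E' where v: "v = Handler xr cr h" and C: "C = CTy A' \<Sigma>' E'"
    and "L Map.empty h E' \<Sigma>' D"
    by (auto elim!: closed_vtyp_HandTE)
  with assms have h: "htyp L Map.empty h \<Sigma>' D" by (blast intro: reasoning_logic_htyp)
  from c_with.hyps(4)[OF c_with.prems(1) C] show ?case
  proof (elim disjE exE conjE)
    fix c' assume "c \<leadsto> c'"
    then show ?thesis by (auto intro: step.intros)
  next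
    fix u assume "c = Return u"
    then show ?thesis using v by (auto intro: step.intros)
  next
    fix op u y c0 Ao Bo assume "c = Op op u y c0" and "(op, Ao, Bo) |\<in>| \<Sigma>'"
    then show ?thesis
      using v htyp_clause_exists[OF h] by (blast intro: step.intros)
  qed
qed (auto elim!: closed_vtyp_BoolTE closed_vtyp_FunTE intro: step.intros)

theorem theorem1:
  assumes "reasoning_logic L"
    and "ctyp L Map.empty c (CTy A \<Sigma> E)"
  shows "((\<exists>c'. c \<leadsto> c') \<or> (\<exists>v. c = Return v) \<or>
          (\<exists>op v y c0. c = Op op v y c0 \<and> (\<exists>Ao Bo. (op, Ao, Bo) |\<in>| \<Sigma>)))
       \<and> (\<forall>c'. c \<leadsto> c' \<longrightarrow> ctyp L Map.empty c' (CTy A \<Sigma> E))"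
  using progress(5)[OF assms(1,2) refl refl] preservation[OF assms(1) _ assms(2)] by blast

end
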